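(* Let $G$ be an abelian group, $H$ a group and $\phi:G\to H$ a nontrivial group homomorphism, and let $F=G\cup\{0\}$ be a Massouros hyperfield with respect to $\phi$ (as defined in the context). Then $F$ has large sums, i.e. there is a nontrivial group homomorphism $f:G\to H'$ (to some group $H'$) such that for all $x,y,z\in G$, if $f(x)=f(y)\ne f(z)$ then $x+y+z=F$.
   Context: A hyperaddition on a nonempty set $H$ is a map $+:H\times H\to\mathcal P^*(H)$ (nonempty subsets of $H$) that is commutative and associative, where for subsets $A,B$ one sets $A+B=\bigcup_{a\in A,b\in B}(a+b)$ and an element $x$ is identified with $\{x\}$; thus $x+y+z=(x+y)+z$. A hypergroup is a set with a hyperaddition having a unique $0$ with $0+h=\{h\}$ for all $h$, such that for each $x$ there is a unique $y=:-x$ with $0\in x+y$, and such that $x\in y+z$ implies $z\in x+(-y)$. A hyperfield is a set $F$ with a hyperaddition and a multiplication such that $(F,+)$ is a hypergroup, $(F,\cdot)$ is a monoid, $a(b+c)=ab+ac$, $r\cdot 0=0$ for all $r$, and $F\setminus\{0\}$ is a multiplicative group. Massouros hyperfield: let $G$ be an abelian group written multiplicatively and $\phi:G\to H$ a group homomorphism with $|\phi(G)|\ge 3$. Let $F=G\cup\{0\}$, with multiplication that of $G$ extended by $0\cdot x=x\cdot 0=0$, and equipped with a hyperaddition making $F$ a hyperfield. $F$ is Massouros (with respect to $\phi$) if: (1) $\phi(-x)=\phi(x)$ for all $x\in G$; (2) for all $x,y\in G$ with $\phi(x)=\phi(y)$, $G\setminus\phi^{-1}(\phi(x))\subseteq x+y$;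 (3) for all $x,y\in G$ with $\phi(x)\ne\phi(y)$, $\phi^{-1}(\{\phi(x),\phi(y)\})\subseteq x+y$. *)

theory Defs
  imports "HOL-Algebra.Algebra"
begin

definition set_hadd :: "('a \<Rightarrow> 'a \<Rightarrow> 'a set) \<Rightarrow> 'a set \<Rightarrow> 'a set \<Rightarrow> 'a set" where
  "set_hadd hadd A B = (\<Union>a\<in>A. \<Union>b\<in>B. hadd a b)"

definition hyperaddition :: "'a set \<Rightarrow> ('a \<Rightarrow> 'a \<Rightarrow> 'a set) \<Rightarrow> bool" where
  "hyperaddition H hadd \<longleftrightarrow> H \<noteq> {} \<and>
     (\<forall>x\<in>H. \<forall>y\<in>H. hadd x y \<subseteq> H \<and> hadd x y \<noteq> {}) \<and>
     (\<forall>x\<in>H. \<forall>y\<in>H. hadd x y = hadd y x) \<and>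
     (\<forall>x\<in>H. \<forall>y\<in>H. \<forall>w\<in>H. set_hadd hadd (hadd x y) {w} = set_hadd hadd {x} (hadd y w))"

definition hneg :: "'a set \<Rightarrow> ('a \<Rightarrow> 'a \<Rightarrow> 'a set) \<Rightarrow> 'a \<Rightarrow> 'a \<Rightarrow> 'a" where
  "hneg H hadd z x = (THE y. y \<in> H \<and> z \<in> hadd x y)"

definition hypergroup :: "'a set \<Rightarrow> ('a \<Rightarrow> 'a \<Rightarrow> 'a set) \<Rightarrow> 'a \<Rightarrow> bool" where
  "hypergroup H hadd z \<longleftrightarrow> hyperaddition H hadd \<and>
     z \<in> H \<and> (\<forall>h\<in>H. hadd z h = {h}) \<and>
     (\<forall>z'\<in>H. (\<forall>h\<in>H. hadd z' h = {h}) \<longrightarrow> z' = z) \<and>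
     (\<forall>x\<in>H. \<exists>!y. y \<in> H \<and> z \<in> hadd x y) \<and>
     (\<forall>x\<in>H. \<forall>y\<in>H. \<forall>w\<in>H. x \<in> hadd y w \<longrightarrow> w \<in> hadd x (hneg H hadd z y))"

definition hyperfield :: "('a, 'b) monoid_scheme \<Rightarrow> ('a \<Rightarrow> 'a \<Rightarrow> 'a set) \<Rightarrow> 'a \<Rightarrow> bool" where
  "hyperfield M hadd z \<longleftrightarrow> hypergroup (carrier M) hadd z \<and> monoid M \<and>
     (\<forall>a\<in>carrier M. \<forall>b\<in>carrier M. \<forall>c\<in>carrier M.
        (\<lambda>d. a \<otimes>\<^bsub>M\<^esub> d) ` hadd b c = hadd (a \<otimes>\<^bsub>M\<^esub> b) (a \<otimes>\<^bsub>M\<^esub> c)) \<and>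
     (\<forall>r\<in>carrier M. r \<otimes>\<^bsub>M\<^esub> z = z) \<and>
     group (M\<lparr>carrier := carrier M - {z}\<rparr>)"

abbreviation mult_group :: "('a, 'b) monoid_scheme \<Rightarrow> 'a \<Rightarrow> ('a, 'b) monoid_scheme" where
  "mult_group M z \<equiv> M\<lparr>carrier := carrier M - {z}\<rparr>"

definition massouros ::
  "('a, 'b) monoid_scheme \<Rightarrow> ('a \<Rightarrow> 'a \<Rightarrow> 'a set) \<Rightarrow> 'a \<Rightarrow> ('c, 'd) monoid_scheme \<Rightarrow> ('a \<Rightarrow> 'c) \<Rightarrow> bool" where
  "massouros M hadd z H \<phi> \<longleftrightarrow>
     (let G = carrier M - {z} in
       comm_group (mult_group M z) \<and> group H \<and> \<phi> \<in> hom (mult_group M z) H \<and>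
       (\<exists>a b c. a \<in> \<phi> ` G \<and> b \<in> \<phi> ` G \<and> c \<in> \<phi> ` G \<and> a \<noteq> b \<and> a \<noteq> c \<and> b \<noteq> c) \<and>
       hyperfield M hadd z \<and>
       (\<forall>x\<in>carrier M. x \<otimes>\<^bsub>M\<^esub> z = z \<and> z \<otimes>\<^bsub>M\<^esub> x = z) \<and>
       (\<forall>x\<in>G. \<phi> (hneg (carrier M) hadd z x) = \<phi> x) \<and>
       (\<forall>x\<in>G. \<forall>y\<in>G. \<phi> x = \<phi> y \<longrightarrow> G - {w\<in>G. \<phi> w = \<phi> x} \<subseteq> hadd x y) \<and>
       (\<forall>x\<in>G. \<forall>y\<in>G. \<phi> x \<noteq> \<phi> y \<longrightarrow> {w\<in>G. \<phi> w = \<phi> x \<or> \<phi> w = \<phi> y} \<subseteq> hadd x y))"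

end

theory Submission
  imports Defs
begin

text \<open>
  Suppose \<open>\<phi> x = \<phi> y \<noteq> \<phi> w\<close>. The sum \<open>x + y\<close> contains every element outside
  the fibre of \<open>x\<close>, in particular \<open>w\<close>, \<open>-w\<close> (which lies in the fibre of \<open>w\<close>) and
  an element \<open>u\<close> whose fibre differs from those of \<open>x\<close> and \<open>w\<close> (there are at least three
  fibres). Then \<open>-w + w\<close> contains \<open>0\<close>, \<open>w + w\<close> contains everything outside the fibre
  of \<open>w\<close>, and \<open>u + w\<close> contains the fibre of \<open>w\<close>; so \<open>x + y + w = F\<close>.
  The homomorphism required for large sums is \<open>\<phi>\<close> itself, transported to the quotient by
  its kernel, which has the same fibres as \<open>\<phi>\<close>.
\<close>

lemma set_hadd_singleton_right: "set_hadd hadd A {w} = (\<Union>u\<in>A. hadd u w)"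
  by (simp add: set_hadd_def)

lemma hyperaddition_hadd_subset:
  "hyperaddition H hadd \<Longrightarrow> x \<in> H \<Longrightarrow> y \<in> H \<Longrightarrow> hadd x y \<subseteq> H"
  by (simp add: hyperaddition_def)

lemma hyperaddition_hadd_commute:
  "hyperaddition H hadd \<Longrightarrow> x \<in> H \<Longrightarrow> y \<in> H \<Longrightarrow> hadd x y = hadd y x"
  by (simp add: hyperaddition_def)

lemma hypergroup_hyperaddition: "hypergroup H hadd z \<Longrightarrow> hyperaddition H hadd"
  by (simp add: hypergroup_def)

lemma hypergroup_hneg:
  assumes "hypergroup H hadd z" and "x \<in> H"
  shows "hneg H hadd z x \<in> H" and "z \<in> hadd x (hneg H hadd z x)"
proof -
  have "\<exists>!y. y \<in> H \<and> z \<in> hadd x y"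
    using assms by (simp add: hypergroup_def)
  then have "hneg H hadd z x \<in> H \<and> z \<in> hadd x (hneg H hadd z x)"
    unfolding hneg_def by (rule theI')
  then show "hneg H hadd z x \<in> H" and "z \<in> hadd x (hneg H hadd z x)"
    by auto
qed

lemma hypergroup_hneg_neq_zero:
  assumes hg: "hypergroup H hadd z" and x: "x \<in> H" "x \<noteq> z"
  shows "hneg H hadd z x \<noteq> z"
proof
  assume "hneg H hadd z x = z"
  with hypergroup_hneg(2)[OF hg x(1)] have "z \<in> hadd x z" by simp
  moreover have "hadd x z = {x}"
    using hg x(1) hyperaddition_hadd_commute[OF hypergroup_hyperaddition[OF hg], of x z]
    by (simp add: hypergroup_def)
  ultimately show False using x(2) by simp
qed

lemma massouros_hypergroup: "massouros M hadd z H \<phi> \<Longrightarrow> hypergroup (carrier M) hadd z"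
  by (simp add: massouros_def hyperfield_def Let_def)

lemma massouros_hneg_fibre:
  "massouros M hadd z H \<phi> \<Longrightarrow> x \<in> carrier M - {z} \<Longrightarrow> \<phi> (hneg (carrier M) hadd z x) = \<phi> x"
  by (simp add: massouros_def Let_def)

lemma massouros_hadd_same_fibre:
  assumes "massouros M hadd z H \<phi>" and "x \<in> carrier M - {z}" "y \<in> carrier M - {z}"
    and "w \<in> carrier M - {z}" and "\<phi> x = \<phi> y" "\<phi> w \<noteq> \<phi> x"
  shows "w \<in> hadd x y"
  using assms unfolding massouros_def Let_def by blast

lemma massouros_hadd_distinct_fibres:
  assumes "massouros M hadd z H \<phi>" and "x \<in> carrier M - {z}" "y \<in> carrier M - {z}"
    and "w \<in> carrier M - {z}" and "\<phi> x \<noteq> \<phi> y" "\<phi> w = \<phi> x \<or> \<phi> w = \<phi> y"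
  shows "w \<in> hadd x y"
  using assms unfolding massouros_def Let_def by blast

lemma massouros_avoid_two_fibres:
  assumes "massouros M hadd z H \<phi>"
  obtains u where "u \<in> carrier M - {z}" "\<phi> u \<noteq> a" "\<phi> u \<noteq> b"
proof -
  obtain p q r where "{p, q, r} \<subseteq> carrier M - {z}"
    and "\<phi> p \<noteq> \<phi> q" "\<phi> p \<noteq> \<phi> r" "\<phi> q \<noteq> \<phi> r"
    using assms unfolding massouros_def Let_def by auto
  then have "\<exists>u\<in>carrier M - {z}. \<phi> u \<noteq> a \<and> \<phi> u \<noteq> b"
    by (metis insert_subset)
  then show thesis using that by blast
qed

lemma massouros_large_sum:
  assumes ms: "massouros M hadd z H \<phi>"
    and x: "x \<in> carrier M - {z}" and y: "y \<in> carrier M - {z}" and w: "w \<in> carrier M - {z}"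
    and xy: "\<phi> x = \<phi> y" and yw: "\<phi> y \<noteq> \<phi> w"
  shows "set_hadd hadd (hadd x y) {w} = carrier M"
proof -
  have hg: "hypergroup (carrier M) hadd z"
    using ms by (rule massouros_hypergroup)
  note ha = hypergroup_hyperaddition[OF hg]
  have w_in_xy: "w \<in> hadd x y"
    using massouros_hadd_same_fibre[OF ms x y w xy] yw xy by simp
  have "t \<in> (\<Union>u\<in>hadd x y. hadd u w)" if t: "t \<in> carrier M" for t
  proof (cases "t = z")
    case True
    define n where "n = hneg (carrier M) hadd z w"
    have n: "n \<in> carrier M - {z}"
      using hypergroup_hneg(1)[OF hg] hypergroup_hneg_neq_zero[OF hg] w by (auto simp: n_def)
    have "\<phi> n = \<phi> w"
      using massouros_hneg_fibre[OF ms w] by (simp add: n_def)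
    then have "n \<in> hadd x y"
      using massouros_hadd_same_fibre[OF ms x y n xy] xy yw by simp
    moreover have "z \<in> hadd n w"
      using hypergroup_hneg(2)[OF hg] hyperaddition_hadd_commute[OF ha] n w by (auto simp: n_def)
    ultimately show ?thesis using True by blast
  next
    case False
    with t have t': "t \<in> carrier M - {z}" by simp
    show ?thesis
    proof (cases "\<phi> t = \<phi> w")
      case False
      then have "t \<in> hadd w w"
        using massouros_hadd_same_fibre[OF ms w w t'] by simp
      with w_in_xy show ?thesis by blast
    next
      case True
      obtain u where u: "u \<in> carrier M - {z}" "\<phi> u \<noteq> \<phi> x" "\<phi> u \<noteq> \<phi> w"
        using massouros_avoid_two_fibres[OF ms] .
      have "u \<in> hadd x y"
        using massouros_hadd_same_fibre[OF ms x y u(1) xy] u(2) by simp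
      moreover have "t \<in> hadd u w"
        using massouros_hadd_distinct_fibres[OF ms u(1) w t'] u(3) True by simp
      ultimately show ?thesis by blast
    qed
  qed
  moreover have "(\<Union>u\<in>hadd x y. hadd u w) \<subseteq> carrier M"
    using hyperaddition_hadd_subset[OF ha] x y w by blast
  ultimately show ?thesis
    unfolding set_hadd_singleton_right by blast
qed

lemma (in group_hom) image_rcos_kernel:
  "g \<in> carrier G \<Longrightarrow> h ` (kernel G H h #> g) = {h g}"
  by (auto simp add: kernel_def r_coset_def intro!: imageI)

lemma (in group_hom) rcos_kernel_eq_iff:
  assumes "g \<in> carrier G" "g' \<in> carrier G"
  shows "kernel G H h #> g = kernel G H h #> g' \<longleftrightarrow> h g = h g'"
  using assms image_rcos_kernel[of g] image_rcos_kernel[of g'] FactGroup_subset[of g g']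
    FactGroup_subset[of g' g]
  by (metis singleton_inject subset_antisym)

lemma (in group_hom) exists_set_group_hom_with_same_fibres:
  "\<exists>(H' :: 'a set monoid) f. group H' \<and> f \<in> hom G H' \<and>
     (\<forall>x\<in>carrier G. \<forall>y\<in>carrier G. f x = f y \<longleftrightarrow> h x = h y)"
proof (intro exI conjI)
  interpret normal "kernel G H h" G
    by (rule normal_kernel)
  show "group (G Mod kernel G H h)"
    by (rule factorgroup_is_group)
  show "(\<lambda>g. kernel G H h #> g) \<in> hom G (G Mod kernel G H h)"
    by (rule r_coset_hom_Mod)
  show "\<forall>x\<in>carrier G. \<forall>y\<in>carrier G. kernel G H h #> x = kernel G H h #> y \<longleftrightarrow> h x = h y"
    by (simp add: rcos_kernel_eq_iff)
qed

theorem mainTheorem2: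
  fixes M :: "('a, 'b) monoid_scheme" and hadd :: "'a \<Rightarrow> 'a \<Rightarrow> 'a set" and z :: 'a
    and H :: "('c, 'd) monoid_scheme" and \<phi> :: "'a \<Rightarrow> 'c"
  assumes "comm_group (mult_group M z)"
    and "group H"
    and "\<phi> \<in> hom (mult_group M z) H"
    and "\<exists>x\<in>carrier M - {z}. \<phi> x \<noteq> \<one>\<^bsub>H\<^esub>"
    and "massouros M hadd z H \<phi>"
  shows "\<exists>(H' :: 'a set monoid) f. group H' \<and> f \<in> hom (mult_group M z) H' \<and>
           (\<exists>x\<in>carrier M - {z}. f x \<noteq> \<one>\<^bsub>H'\<^esub>) \<and>
           (\<forall>x\<in>carrier M - {z}. \<forall>y\<in>carrier M - {z}. \<forall>w\<in>carrier M - {z}.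
              f x = f y \<and> f y \<noteq> f w \<longrightarrow> set_hadd hadd (hadd x y) {w} = carrier M)"
proof -
  let ?G = "mult_group M z"
  interpret \<phi>: group_hom ?G H \<phi>
    using assms(1-3) by (simp add: group_hom_def group_hom_axioms_def comm_group_def)
  obtain H' :: "'a set monoid" and f where H': "group H'" and f: "f \<in> hom ?G H'"
    and fibres: "\<forall>x\<in>carrier ?G. \<forall>y\<in>carrier ?G. f x = f y \<longleftrightarrow> \<phi> x = \<phi> y"
    using \<phi>.exists_set_group_hom_with_same_fibres by blast
  interpret f: group_hom ?G H' f
    using \<phi>.is_group H' f by (simp add: group_hom_def group_hom_axioms_def)
  obtain x where x: "x \<in> carrier M - {z}" "\<phi> x \<noteq> \<one>\<^bsub>H\<^esub>"
    using assms(4) by blast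
  have "f x \<noteq> f \<one>\<^bsub>?G\<^esub>"
    using fibres x \<phi>.G.one_closed \<phi>.hom_one by simp
  then have "f x \<noteq> \<one>\<^bsub>H'\<^esub>"
    using f.hom_one by simp
  moreover have "\<forall>x\<in>carrier M - {z}. \<forall>y\<in>carrier M - {z}. \<forall>w\<in>carrier M - {z}.
      f x = f y \<and> f y \<noteq> f w \<longrightarrow> set_hadd hadd (hadd x y) {w} = carrier M"
    using fibres massouros_large_sum[OF assms(5)] by auto
  ultimately show ?thesis
    using H' f x(1) by blast
qed

end
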